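(* Let $X$ be a compact subset of a symplectic manifold $(M,\omega)$, and let $(X_n)$ be a decreasing sequence of compact sets ($X_{n+1}\subseteq X_n$), each containing $X$, converging to $X$ in the Hausdorff distance. Let $\alpha\in H^1(X;\mathbb Z)$, let $U_X\supset X$ be open and $\bar\alpha$ a homotopy class of continuous maps $U_X\to S^1$ restricting to $\alpha$ on $X$. Then (with $\bar\alpha|_{X_n}$ defined for all $n$ large enough that $X_n\subset U_X$) \[\lim_{n\to\infty}\mathrm{Pb}_{X_n}(\bar\alpha|_{X_n})=\mathrm{Pb}_X(\alpha).\]
   Context: $\{\cdot,\cdot\}$ is the Poisson bracket and $\|\cdot\|$ the supremum norm over $M$. For compact $X\subset M$, $H^1(X;\mathbb Z)$ (Čech cohomology) is identified with the group $[X:S^1]$ of homotopy classes of continuous maps $X\to S^1$. $\overline{B_1}\subset\mathbb R^2$ is the closed unit disc and $S^1=\partial\overline{B_1}$. For $\alpha\in H^1(X;\mathbb Z)$, $\mathrm{Pb}_X(\alpha)$ is the infimum of $\|\{\phi_1,\phi_2\}\|$ over smooth $\phi=(\phi_1,\phi_2):M\to\overline{B_1}$ with $\phi_1,\phi_2$ compactly supported and such that there is an open $U\supset X$ with $\phi(U)\subseteq S^1$ and $[\phi|_X]=\alpha$ (infimum of the empty set is $+\infty$). *)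

theory Defs
  imports "HOL-Analysis.Analysis"
begin

text \<open>C-infinity: differentiable, and all first partial derivatives are again C-infinity
  (greatest fixed point, i.e. derivatives of every order exist).\<close>
coinductive C_inf :: "'e::euclidean_space set \<Rightarrow> ('e \<Rightarrow> real) \<Rightarrow> bool" for S where
  "f differentiable_on S \<Longrightarrow>
   (\<forall>i\<in>Basis. C_inf S (\<lambda>x. frechet_derivative f (at x) i)) \<Longrightarrow> C_inf S f"

definition C_inf_vec :: "'e::euclidean_space set \<Rightarrow> ('e \<Rightarrow> 'f::euclidean_space) \<Rightarrow> bool" where
  "C_inf_vec S g \<longleftrightarrow> (\<forall>i\<in>Basis. C_inf S (\<lambda>x. g x \<bullet> i))"

type_synonym ('m,'e) chart = "'m set \<times> ('m \<Rightarrow> 'e)"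

definition is_chart :: "('m::topological_space, 'e::euclidean_space) chart \<Rightarrow> bool" where
  "is_chart c \<longleftrightarrow> (case c of (U, \<phi>) \<Rightarrow>
     open U \<and> open (\<phi> ` U) \<and> inj_on \<phi> U \<and> continuous_on U \<phi> \<and>
     continuous_on (\<phi> ` U) (inv_into U \<phi>))"

text \<open>Transition map from chart c to chart d, defined on the image under c of the overlap.\<close>
definition transition :: "('m, 'e) chart \<Rightarrow> ('m, 'e) chart \<Rightarrow> 'e \<Rightarrow> 'e" where
  "transition c d = snd d \<circ> inv_into (fst c) (snd c)"

definition smooth_atlas :: "('m::topological_space, 'e::euclidean_space) chart set \<Rightarrow> bool" where
  "smooth_atlas A \<longleftrightarrow> (\<forall>c\<in>A. is_chart c) \<and> (\<Union>c\<in>A. fst c) = UNIV \<and>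
     (\<forall>c\<in>A. \<forall>d\<in>A. C_inf_vec (snd c ` (fst c \<inter> fst d)) (transition c d))"

text \<open>A 2-form is given in every chart c by bilinear forms om c y (y in the chart image),
  compatible under transition maps (pullback).\<close>
definition symplectic_manifold ::
  "('m::topological_space, 'e::euclidean_space) chart set \<Rightarrow>
   (('m, 'e) chart \<Rightarrow> 'e \<Rightarrow> 'e \<Rightarrow> 'e \<Rightarrow> real) \<Rightarrow> bool" where
  "symplectic_manifold A om \<longleftrightarrow> smooth_atlas A \<and>
    (\<forall>c\<in>A. \<forall>y\<in>snd c ` fst c.
       (\<forall>u v. om c y u v = (\<Sum>i\<in>Basis. \<Sum>j\<in>Basis. (u \<bullet> i) * (v \<bullet> j) * om c y i j)) \<and>
       (\<forall>u v. om c y u v = - om c y v u) \<and>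
       (\<forall>u. u \<noteq> 0 \<longrightarrow> (\<exists>v. om c y u v \<noteq> 0)) \<and>
       (\<forall>i\<in>Basis. \<forall>j\<in>Basis. \<forall>k\<in>Basis.
          frechet_derivative (\<lambda>z. om c z j k) (at y) i
        + frechet_derivative (\<lambda>z. om c z k i) (at y) j
        + frechet_derivative (\<lambda>z. om c z i j) (at y) k = 0)) \<and>
    (\<forall>c\<in>A. \<forall>i\<in>Basis. \<forall>j\<in>Basis. C_inf (snd c ` fst c) (\<lambda>y. om c y i j)) \<and>
    (\<forall>c\<in>A. \<forall>d\<in>A. \<forall>y\<in>snd c ` (fst c \<inter> fst d). \<forall>u v.
       om c y u v = om d (transition c d y)
          (frechet_derivative (transition c d) (at y) u)
          (frechet_derivative (transition c d) (at y) v))"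

definition smooth_fun :: "('m, 'e::euclidean_space) chart set \<Rightarrow> ('m \<Rightarrow> real) \<Rightarrow> bool" where
  "smooth_fun A f \<longleftrightarrow> (\<forall>c\<in>A. C_inf (snd c ` fst c) (f \<circ> inv_into (fst c) (snd c)))"

text \<open>Poisson bracket, computed in a chart around p:
  {f,g}(p) = om(X_f, X_g) where om(X_f, -) = df.\<close>
definition poisson ::
  "('m, 'e::euclidean_space) chart set \<Rightarrow> (('m, 'e) chart \<Rightarrow> 'e \<Rightarrow> 'e \<Rightarrow> 'e \<Rightarrow> real) \<Rightarrow>
   ('m \<Rightarrow> real) \<Rightarrow> ('m \<Rightarrow> real) \<Rightarrow> 'm \<Rightarrow> real" where
  "poisson A om f g p =
    (let c = (SOME c. c \<in> A \<and> p \<in> fst c); y = snd c p;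
         ham = (\<lambda>h. THE v. \<forall>u. om c y v u =
                   frechet_derivative (h \<circ> inv_into (fst c) (snd c)) (at y) u)
     in om c y (ham f) (ham g))"

definition compact_support :: "('m::topological_space \<Rightarrow> real) \<Rightarrow> bool" where
  "compact_support f \<longleftrightarrow> compact (closure {p. f p \<noteq> 0})"

text \<open>Pb_X(alpha), where the class alpha in [X : S^1] is given by a representative a;
  S^1 is the unit circle in the complex plane (identified with R^2).\<close>
definition Pb ::
  "('m::topological_space, 'e::euclidean_space) chart set \<Rightarrow>
   (('m, 'e) chart \<Rightarrow> 'e \<Rightarrow> 'e \<Rightarrow> 'e \<Rightarrow> real) \<Rightarrow> 'm set \<Rightarrow> ('m \<Rightarrow> complex) \<Rightarrow> ereal" where
  "Pb A om X a = Inf {(SUP p. ereal \<bar>poisson A om f1 f2 p\<bar>) | f1 f2.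
      smooth_fun A f1 \<and> smooth_fun A f2 \<and> compact_support f1 \<and> compact_support f2 \<and>
      (\<forall>p. Complex (f1 p) (f2 p) \<in> cball 0 1) \<and>
      (\<exists>U. open U \<and> X \<subseteq> U \<and> (\<forall>p\<in>U. Complex (f1 p) (f2 p) \<in> sphere 0 1)) \<and>
      homotopic_with_canon (\<lambda>_. True) X (sphere 0 1) (\<lambda>p. Complex (f1 p) (f2 p)) a}"

definition hausdorff_dist :: "'a::metric_space set \<Rightarrow> 'a set \<Rightarrow> ereal" where
  "hausdorff_dist S T =
    (if S = {} \<and> T = {} then 0 else if S = {} \<or> T = {} then \<infinity>
     else max (SUP x\<in>S. ereal (infdist x T)) (SUP y\<in>T. ereal (infdist y S)))"

end

theory Submission
  imports Defs
begin

text \<open>Every map admissible for X_n is admissible for X, so Pb_X(\<alpha>) is a lower bound.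
  Conversely, a map \<phi> admissible for X takes values in the circle on an open set and is
  homotopic to \<alpha>-bar on X. This homotopy extends to an open neighbourhood V of X: extend it to
  [0,1] \<times> U by Tietze's theorem; by compactness it stays nonzero on [0,1] \<times> V for a thin V, so
  it can be normalised back into the circle. Hence \<phi> is admissible for every subset of V, and
  X_n \<subseteq> V for large n.\<close>

lemma homotopy_extension_to_product:
  fixes f g :: "'a::{metric_space,second_countable_topology} \<Rightarrow> 'b::real_inner"
    and h :: "real \<times> 'a \<Rightarrow> 'b"
  assumes "closed X" "X \<subseteq> W" "continuous_on W f" "continuous_on W g"
    and "continuous_on ({0..1} \<times> X) h"
    and "\<And>x. x \<in> X \<Longrightarrow> h (0, x) = f x" "\<And>x. x \<in> X \<Longrightarrow> h (1, x) = g x"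
  obtains G where "continuous_on (UNIV \<times> W) G"
    "\<And>x. x \<in> W \<Longrightarrow> G (0, x) = f x" "\<And>x. x \<in> W \<Longrightarrow> G (1, x) = g x"
    "\<And>p. p \<in> {0..1} \<times> X \<Longrightarrow> G p = h p"
proof -
  define P0 where "P0 = {0::real} \<times> W"
  define P1 where "P1 = {1::real} \<times> W"
  define PX where "PX = {0..1::real} \<times> X"
  define F where "F = (\<lambda>(t, x). if x \<in> X then h (t, x) else if t = 0 then f x else g x)"
  have pieces_sub: "P0 \<union> P1 \<union> PX \<subseteq> UNIV \<times> W"
    using \<open>X \<subseteq> W\<close> by (auto simp: P0_def P1_def PX_def)
  have closed_pieces: "closedin (top_of_set (UNIV \<times> W)) P"
    if "P \<in> {P0, P1, PX}" for P
  proof -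
    have "P0 = (UNIV \<times> W) \<inter> ({0} \<times> UNIV)" "P1 = (UNIV \<times> W) \<inter> ({1} \<times> UNIV)"
      by (auto simp: P0_def P1_def)
    moreover have "closedin (top_of_set (UNIV \<times> W)) PX"
      using pieces_sub \<open>closed X\<close> by (intro closed_subset) (auto simp: PX_def closed_Times)
    ultimately show ?thesis
      using that by (auto intro!: closedin_closed_Int simp: closed_Times)
  qed
  have closedin_piece: "closedin (top_of_set T) P"
    if "P \<in> {P0, P1, PX}" "P \<subseteq> T" "T \<subseteq> P0 \<union> P1 \<union> PX" for P T
    using closedin_subset_trans[OF closed_pieces[OF that(1)] that(2)] that(3) pieces_sub by blast
  have "continuous_on P0 F"
    by (rule continuous_on_eq[of _ "f \<circ> snd"])
      (auto simp: P0_def F_def assms(6) intro!: continuous_on_compose2[OF \<open>continuous_on W f\<close>]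
        continuous_intros)
  moreover have "continuous_on P1 F"
    by (rule continuous_on_eq[of _ "g \<circ> snd"])
      (auto simp: P1_def F_def assms(7) intro!: continuous_on_compose2[OF \<open>continuous_on W g\<close>]
        continuous_intros)
  moreover have "continuous_on PX F"
    unfolding PX_def
    by (rule continuous_on_eq[OF \<open>continuous_on ({0..1} \<times> X) h\<close>]) (auto simp: F_def)
  ultimately have "continuous_on (P0 \<union> P1 \<union> PX) F"
    by (intro continuous_on_Un_local closedin_Un) (auto intro: closedin_piece)
  moreover have "closedin (top_of_set (UNIV \<times> W)) (P0 \<union> P1 \<union> PX)"
    using closed_pieces by (intro closedin_Un) auto
  ultimately obtain G where G: "continuous_on (UNIV \<times> W) G"
    and G_F: "\<And>p. p \<in> P0 \<union> P1 \<union> PX \<Longrightarrow> G p = F p"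
    using Tietze_unbounded by blast
  show ?thesis
    by (rule that[OF G]) (auto simp: G_F P0_def P1_def PX_def F_def assms(6,7))
qed

lemma homotopic_with_sphere_by_nonvanishing_homotopy:
  fixes G :: "real \<times> 'a::topological_space \<Rightarrow> 'b::real_normed_vector"
  assumes "continuous_on ({0..1} \<times> Y) G" "\<And>p. p \<in> {0..1} \<times> Y \<Longrightarrow> G p \<noteq> 0"
    and "\<And>x. x \<in> Y \<Longrightarrow> G (0, x) = f x" "\<And>x. x \<in> Y \<Longrightarrow> G (1, x) = g x"
    and "f ` Y \<subseteq> sphere 0 1" "g ` Y \<subseteq> sphere 0 1"
  shows "homotopic_with_canon (\<lambda>_. True) Y (sphere 0 1) f g"
proof -
  define k where "k p = G p /\<^sub>R norm (G p)" for p
  have "continuous_on ({0..1} \<times> Y) k"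
    unfolding k_def using assms(1,2) by (intro continuous_intros) auto
  moreover have "k ` ({0..1} \<times> Y) \<subseteq> sphere 0 1"
    using assms(2) by (auto simp: k_def)
  moreover have "k (0, x) = f x" "k (1, x) = g x" if "x \<in> Y" for x
    using assms(3-6) that by (auto simp: k_def)
  ultimately show ?thesis
    by (auto simp: homotopic_with intro!: exI[of _ k])
qed

lemma homotopic_with_sphere_neighbourhood_extension:
  fixes f g :: "'a::{metric_space,second_countable_topology} \<Rightarrow> 'b::real_inner"
  assumes "compact X" "open W" "X \<subseteq> W"
    and "continuous_on W f" "f ` W \<subseteq> sphere 0 1" "continuous_on W g" "g ` W \<subseteq> sphere 0 1"
    and "homotopic_with_canon (\<lambda>_. True) X (sphere 0 1) f g"
  obtains V where "open V" "X \<subseteq> V" "V \<subseteq> W"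
    "homotopic_with_canon (\<lambda>_. True) V (sphere 0 1) f g"
proof -
  obtain h where h: "continuous_on ({0..1::real} \<times> X) h" "h ` ({0..1} \<times> X) \<subseteq> sphere 0 1"
    and h0: "\<And>x. h (0, x) = f x" and h1: "\<And>x. h (1, x) = g x"
    using assms(8) by (auto simp: homotopic_with_def image_subset_iff_funcset)
  obtain G where G: "continuous_on (UNIV \<times> W) G"
    and G0: "\<And>x. x \<in> W \<Longrightarrow> G (0, x) = f x" and G1: "\<And>x. x \<in> W \<Longrightarrow> G (1, x) = g x"
    and G_h: "\<And>p. p \<in> {0..1} \<times> X \<Longrightarrow> G p = h p"
    by (rule homotopy_extension_to_product[of X W f g h])
      (use assms h h0 h1 compact_imp_closed in auto)
  define N where "N = (UNIV \<times> W) \<inter> G -` (- {0})"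
  have "open N"
    unfolding N_def using G \<open>open W\<close>
    by (intro continuous_open_preimage) (auto simp: open_Times)
  moreover have "{0..1} \<times> X \<subseteq> N"
    using G_h h(2) \<open>X \<subseteq> W\<close> by (force simp: N_def)
  ultimately obtain e where "e > 0" and e: "(\<Union>p\<in>{0..1} \<times> X. ball p e) \<subseteq> N"
    using compact_subset_open_imp_ball_epsilon_subset compact_Times compact_Icc \<open>compact X\<close>
    by metis
  define V where "V = (\<Union>y\<in>X. ball y e)"
  have tube: "{0..1} \<times> V \<subseteq> N"
  proof clarify
    fix t x assume "t \<in> {0..1::real}" "x \<in> V"
    then obtain y where "y \<in> X" "(t, x) \<in> ball (t, y) e"
      by (auto simp: V_def dist_Pair_Pair)
    with e \<open>t \<in> {0..1}\<close> show "(t, x) \<in> N" by blast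
  qed
  then have "V \<subseteq> W"
    unfolding N_def by (auto dest: subsetD[of _ _ "(0, _)"])
  moreover have "homotopic_with_canon (\<lambda>_. True) V (sphere 0 1) f g"
  proof (rule homotopic_with_sphere_by_nonvanishing_homotopy)
    show "continuous_on ({0..1} \<times> V) G"
      using \<open>V \<subseteq> W\<close> by (auto intro: continuous_on_subset[OF G])
  qed (use tube \<open>V \<subseteq> W\<close> G0 G1 assms(5,7) in \<open>auto simp: N_def image_subset_iff\<close>)
  moreover have "open V" "X \<subseteq> V"
    using \<open>e > 0\<close> by (auto simp: V_def)
  ultimately show ?thesis
    using that by blast
qed

lemma hausdorff_dist_less_imp_dist_less:
  fixes S T :: "'a::metric_space set"
  assumes "hausdorff_dist S T < ereal e" "x \<in> S"
  obtains y where "y \<in> T" "dist x y < e"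
proof -
  have "S \<noteq> {}"
    using assms(2) by blast
  then have "T \<noteq> {}"
    using assms(1) by (auto simp: hausdorff_dist_def)
  then have "ereal (infdist x T) \<le> hausdorff_dist S T"
    using assms(2) by (auto simp: hausdorff_dist_def intro!: max.coboundedI1 SUP_upper)
  with assms(1) have "ereal (infdist x T) < ereal e"
    by (rule le_less_trans[rotated])
  then have "(INF y\<in>T. dist x y) < e"
    using \<open>T \<noteq> {}\<close> by (simp add: infdist_notempty)
  with \<open>T \<noteq> {}\<close> show ?thesis
    using that by (auto simp: cINF_less_iff)
qed

lemma hausdorff_dist_tendsto_imp_eventually_subset:
  fixes X :: "'a::metric_space set"
  assumes "((\<lambda>n. hausdorff_dist (Xn n) X) \<longlongrightarrow> 0) F"
    and "compact X" "open V" "X \<subseteq> V"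
  shows "eventually (\<lambda>n. Xn n \<subseteq> V) F"
proof -
  obtain e where "e > 0" and e: "(\<Union>y\<in>X. ball y e) \<subseteq> V"
    using compact_subset_open_imp_ball_epsilon_subset assms(2-4) by blast
  have "eventually (\<lambda>n. hausdorff_dist (Xn n) X < ereal e) F"
    using order_tendstoD(2)[OF assms(1)] \<open>e > 0\<close> by simp
  then show ?thesis
  proof (rule eventually_mono)
    fix n assume less: "hausdorff_dist (Xn n) X < ereal e"
    show "Xn n \<subseteq> V"
    proof
      fix x assume "x \<in> Xn n"
      then obtain y where "y \<in> X" "dist x y < e"
        using hausdorff_dist_less_imp_dist_less[OF less] by blast
      with e show "x \<in> V"
        by (auto simp: dist_commute intro!: subsetD[OF e])
    qed
  qed
qed

lemma smooth_fun_imp_continuous: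
  fixes A :: "('a::topological_space, 'e::euclidean_space) chart set"
  assumes "smooth_atlas A" "smooth_fun A f"
  shows "continuous_on UNIV f"
proof -
  have "open U \<and> continuous_on U f" if "(U, \<psi>) \<in> A" for U \<psi>
  proof -
    have "open U" "inj_on \<psi> U" "continuous_on U \<psi>"
      using assms(1) that by (auto simp: smooth_atlas_def is_chart_def)
    have "C_inf (\<psi> ` U) (f \<circ> inv_into U \<psi>)"
      using assms(2) that by (force simp: smooth_fun_def)
    then have "(f \<circ> inv_into U \<psi>) differentiable_on (\<psi> ` U)"
      by (cases rule: C_inf.cases)
    then have "continuous_on (\<psi> ` U) (f \<circ> inv_into U \<psi>)"
      by (rule differentiable_imp_continuous_on)
    then have "continuous_on U (f \<circ> inv_into U \<psi> \<circ> \<psi>)"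
      using \<open>continuous_on U \<psi>\<close> continuous_on_compose by blast
    then have "continuous_on U f"
      by (rule continuous_on_eq) (simp add: inv_into_f_f[OF \<open>inj_on \<psi> U\<close>])
    with \<open>open U\<close> show ?thesis ..
  qed
  then have "continuous_on (\<Union>c\<in>A. fst c) f"
    by (intro continuous_on_open_UN) auto
  with assms(1) show ?thesis
    by (simp add: smooth_atlas_def)
qed

definition poisson_sup :: "('m, 'e::euclidean_space) chart set \<Rightarrow>
    (('m, 'e) chart \<Rightarrow> 'e \<Rightarrow> 'e \<Rightarrow> 'e \<Rightarrow> real) \<Rightarrow> ('m \<Rightarrow> real) \<Rightarrow> ('m \<Rightarrow> real) \<Rightarrow> ereal"
  where "poisson_sup A om f1 f2 = (SUP p. ereal \<bar>poisson A om f1 f2 p\<bar>)"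

definition Pb_admissible :: "('m::topological_space, 'e::euclidean_space) chart set \<Rightarrow> 'm set \<Rightarrow>
    ('m \<Rightarrow> complex) \<Rightarrow> ('m \<Rightarrow> real) \<Rightarrow> ('m \<Rightarrow> real) \<Rightarrow> bool"
  where "Pb_admissible A X a f1 f2 \<longleftrightarrow>
    smooth_fun A f1 \<and> smooth_fun A f2 \<and> compact_support f1 \<and> compact_support f2 \<and>
    (\<forall>p. Complex (f1 p) (f2 p) \<in> cball 0 1) \<and>
    (\<exists>U. open U \<and> X \<subseteq> U \<and> (\<forall>p\<in>U. Complex (f1 p) (f2 p) \<in> sphere 0 1)) \<and>
    homotopic_with_canon (\<lambda>_. True) X (sphere 0 1) (\<lambda>p. Complex (f1 p) (f2 p)) a"

lemma Pb_eq_Inf_admissible: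
  "Pb A om X a = Inf {poisson_sup A om f1 f2 | f1 f2. Pb_admissible A X a f1 f2}"
  by (simp add: Pb_def poisson_sup_def Pb_admissible_def)

lemma Pb_le_if_admissible:
  "Pb_admissible A X a f1 f2 \<Longrightarrow> Pb A om X a \<le> poisson_sup A om f1 f2"
  unfolding Pb_eq_Inf_admissible by (blast intro: Inf_lower)

lemma Pb_admissible_subset:
  assumes "Pb_admissible A Z b f1 f2" "Y \<subseteq> Z"
    and "homotopic_with_canon (\<lambda>_. True) Y (sphere 0 1) b c"
  shows "Pb_admissible A Y c f1 f2"
proof -
  have "homotopic_with_canon (\<lambda>_. True) Y (sphere 0 1) (\<lambda>p. Complex (f1 p) (f2 p)) b"
    using assms(1,2) homotopic_with_subset_left unfolding Pb_admissible_def by blast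
  then have "homotopic_with_canon (\<lambda>_. True) Y (sphere 0 1) (\<lambda>p. Complex (f1 p) (f2 p)) c"
    using assms(3) by (rule homotopic_with_trans)
  moreover have "\<exists>U. open U \<and> Y \<subseteq> U \<and> (\<forall>p\<in>U. Complex (f1 p) (f2 p) \<in> sphere 0 1)"
    using assms(1,2) unfolding Pb_admissible_def by blast
  ultimately show ?thesis
    using assms(1) unfolding Pb_admissible_def by blast
qed

lemma Pb_mono:
  assumes "Y \<subseteq> Z" "homotopic_with_canon (\<lambda>_. True) Y (sphere 0 1) b c"
  shows "Pb A om Y c \<le> Pb A om Z b"
  unfolding Pb_eq_Inf_admissible
  using Pb_admissible_subset[OF _ assms] by (blast intro: Inf_superset_mono)

lemma Pb_upper_semicontinuous:
  fixes A :: "('m::{metric_space,second_countable_topology}, 'e::euclidean_space) chart set"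
  assumes "smooth_atlas A" "compact X" "open UX" "X \<subseteq> UX"
    and "continuous_on UX b" "b ` UX \<subseteq> sphere 0 1"
    and "homotopic_with_canon (\<lambda>_. True) X (sphere 0 1) b a"
    and "Pb A om X a < y"
  obtains V where "open V" "X \<subseteq> V" "\<And>Y. Y \<subseteq> V \<Longrightarrow> Pb A om Y b < y"
proof -
  obtain f1 f2 where adm: "Pb_admissible A X a f1 f2" and less: "poisson_sup A om f1 f2 < y"
    using assms(8) unfolding Pb_eq_Inf_admissible by (auto simp: Inf_less_iff)
  define \<phi> where "\<phi> p = Complex (f1 p) (f2 p)" for p
  obtain U where "open U" "X \<subseteq> U" and U: "\<phi> ` U \<subseteq> sphere 0 1"
    using adm by (auto simp: Pb_admissible_def \<phi>_def image_subset_iff)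
  have "continuous_on UNIV \<phi>"
    using adm smooth_fun_imp_continuous[OF assms(1)]
    unfolding \<phi>_def Pb_admissible_def by (intro continuous_intros) auto
  have "homotopic_with_canon (\<lambda>_. True) X (sphere 0 1) \<phi> b"
    using adm homotopic_with_trans homotopic_with_symD[OF assms(7)]
    unfolding Pb_admissible_def \<phi>_def by blast
  obtain V where V: "open V" "X \<subseteq> V" "V \<subseteq> U \<inter> UX"
    and hom: "homotopic_with_canon (\<lambda>_. True) V (sphere 0 1) \<phi> b"
  proof (rule homotopic_with_sphere_neighbourhood_extension[of X "U \<inter> UX" \<phi> b])
    show "continuous_on (U \<inter> UX) \<phi>"
      using \<open>continuous_on UNIV \<phi>\<close> by (rule continuous_on_subset) simp
    show "continuous_on (U \<inter> UX) b"
      using assms(5) by (rule continuous_on_subset) simp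
  qed (use assms(2-4,6) U \<open>open U\<close> \<open>X \<subseteq> U\<close> \<open>homotopic_with_canon _ X _ \<phi> b\<close> in auto)
  have "Pb A om Y b < y" if "Y \<subseteq> V" for Y
  proof -
    have "\<forall>p\<in>V. \<phi> p \<in> sphere 0 1"
      using U V(3) by blast
    with V(1) have "\<exists>U. open U \<and> V \<subseteq> U \<and> (\<forall>p\<in>U. \<phi> p \<in> sphere 0 1)"
      by blast
    with adm hom have adm_V: "Pb_admissible A V b f1 f2"
      unfolding Pb_admissible_def \<phi>_def by blast
    have hom_Y: "homotopic_with_canon (\<lambda>_. True) Y (sphere 0 1) b b"
    proof -
      have "Y \<subseteq> UX"
        using that V(3) by blast
      then show ?thesis
        using assms(5,6) by (auto simp: homotopic_with_refl intro: continuous_on_subset)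
    qed
    have "Pb_admissible A Y b f1 f2"
      using adm_V that hom_Y by (rule Pb_admissible_subset)
    then show ?thesis
      using Pb_le_if_admissible less by (blast intro: le_less_trans)
  qed
  with V show ?thesis
    using that by blast
qed

theorem mainTheorem12:
  fixes A :: "('m::{metric_space, second_countable_topology}, 'e::euclidean_space) chart set"
    and om :: "('m, 'e) chart \<Rightarrow> 'e \<Rightarrow> 'e \<Rightarrow> 'e \<Rightarrow> real"
    and X UX :: "'m set" and Xn :: "nat \<Rightarrow> 'm set"
    and a abar :: "'m \<Rightarrow> complex"
  assumes "symplectic_manifold A om"
    and "compact X"
    and "\<And>n. compact (Xn n)"
    and "\<And>n. Xn (Suc n) \<subseteq> Xn n"
    and "\<And>n. X \<subseteq> Xn n"
    and "((\<lambda>n. hausdorff_dist (Xn n) X) \<longlongrightarrow> 0) sequentially"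
    and "continuous_on X a" and "a ` X \<subseteq> sphere 0 1"
    and "open UX" and "X \<subseteq> UX"
    and "continuous_on UX abar" and "abar ` UX \<subseteq> sphere 0 1"
    and "homotopic_with_canon (\<lambda>_. True) X (sphere 0 1) abar a"
  shows "((\<lambda>n. Pb A om (Xn n) abar) \<longlongrightarrow> Pb A om X a) sequentially"
proof (rule order_tendstoI)
  fix y assume "y < Pb A om X a"
  moreover have "Pb A om X a \<le> Pb A om (Xn n) abar" for n
    using assms(5,13) by (rule Pb_mono)
  ultimately show "eventually (\<lambda>n. y < Pb A om (Xn n) abar) sequentially"
    by (auto intro: always_eventually less_le_trans)
next
  fix y assume "Pb A om X a < y"
  moreover have "smooth_atlas A"
    using assms(1) by (simp add: symplectic_manifold_def)
  ultimately obtain V where "open V" "X \<subseteq> V" and V: "\<And>Y. Y \<subseteq> V \<Longrightarrow> Pb A om Y abar < y"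
    using Pb_upper_semicontinuous[of A X UX abar a om y] assms(2,9-13) by blast
  have "eventually (\<lambda>n. Xn n \<subseteq> V) sequentially"
    using assms(6,2) \<open>open V\<close> \<open>X \<subseteq> V\<close> by (rule hausdorff_dist_tendsto_imp_eventually_subset)
  then show "eventually (\<lambda>n. Pb A om (Xn n) abar < y) sequentially"
    by (rule eventually_mono) (rule V)
qed

end
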